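(* Let $k>0$ and consider the system of ODEs, for $r>0$, $\theta$, $z$, $p_R$, $p_S$ real, \[ \dot r = p_R,\quad \dot\theta = \frac{p_S}{r^2},\quad \dot z = \frac{p_S}{2},\quad \dot p_R = \frac{p_S^2}{r^3} - \frac{2kr^3}{(r^4+16z^2)^{3/2}},\quad \dot p_S = -\frac{8kr^2 z}{(r^4+16z^2)^{3/2}}, \] with first integrals $H = \frac12\big(p_R^2+\frac{p_S^2}{r^2}\big) - \frac{k}{\sqrt{r^4+16z^2}}$, \begin{align*} F_1 &= \Big(p_Rp_Sr-2p_R^2z+\frac{2p_S^2z}{r^2}\Big)\cos(2\theta) + \Big(\frac{4p_Rp_Sz}{r}-p_S^2+\frac{kr^2}{\sqrt{r^4+16z^2}}\Big)\sin(2\theta),\\ F_2 &= -\Big(p_Rp_Sr-2p_R^2z+\frac{2p_S^2z}{r^2}\Big)\sin(2\theta) + \Big(\frac{4p_Rp_Sz}{r}-p_S^2+\frac{kr^2}{\sqrt{r^4+16z^2}}\Big)\cos(2\theta),\\ F_3 &= (2zp_R-rp_S)^2 + 4z^2\Big(\frac{p_S^2}{r^2}+\frac{2k}{\sqrt{r^4+16z^2}}\Big). \end{align*} Let $J\ge 0$ and (when $J>0$) $\theta_0\in[0,\pi)$ be defined by $F_1 = J\sin(2\theta_0)$, $F_2 = J\cos(2\theta_0)$ (so $J^2 = F_1^2+F_2^2 = 2HF_3+k^2$). Then every trajectory with fixed values of $H, F_3, \theta_0$ lies on a surface (in coordinates $(r,\theta,z)$) as follows: (i) in the general case $F_3>0$,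 $J>0$, the surface \[ F_3 = 8z^2H + k\sqrt{r^4+16z^2} - \sqrt{k^2+2HF_3}\, r^2\cos\big(2(\theta-\theta_0)\big); \] (ii) in the minimum energy case $F_3>0$, $J=0$, the ellipsoid of revolution $4k^2z^2 + kF_3 r^2 = F_3^2$; (iii) in the degenerate case $F_3=0$, the straight horizontal line through the origin given by $z=0$, $\theta = \theta_0 \bmod \pi$.
   Context: Cylindrical coordinates $x=r\cos\theta$, $y=r\sin\theta$ on $\mathbb{R}^3$ (the Heisenberg group); the system describes nonholonomic motion on the Heisenberg group in the potential $-k/\sqrt{r^4+16z^2}$. $H,F_1,F_2,F_3$ are constant along solutions, and $F_3\ge 0$. *)

theory Defs
  imports "HOL-Analysis.Analysis"
begin

definition rho :: "real \<Rightarrow> real \<Rightarrow> real" where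
  "rho r z = sqrt (r ^ 4 + 16 * z ^ 2)"

definition Ham :: "real \<Rightarrow> real \<Rightarrow> real \<Rightarrow> real \<Rightarrow> real \<Rightarrow> real" where
  "Ham k r z pR pS = (1/2) * (pR ^ 2 + pS ^ 2 / r ^ 2) - k / rho r z"

definition FA :: "real \<Rightarrow> real \<Rightarrow> real \<Rightarrow> real \<Rightarrow> real \<Rightarrow> real" where
  "FA k r z pR pS = pR * pS * r - 2 * pR ^ 2 * z + 2 * pS ^ 2 * z / r ^ 2"

definition FB :: "real \<Rightarrow> real \<Rightarrow> real \<Rightarrow> real \<Rightarrow> real \<Rightarrow> real" where
  "FB k r z pR pS = 4 * pR * pS * z / r - pS ^ 2 + k * r ^ 2 / rho r z"

definition F1 :: "real \<Rightarrow> real \<Rightarrow> real \<Rightarrow> real \<Rightarrow> real \<Rightarrow> real \<Rightarrow> real" where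
  "F1 k r th z pR pS = FA k r z pR pS * cos (2 * th) + FB k r z pR pS * sin (2 * th)"

definition F2 :: "real \<Rightarrow> real \<Rightarrow> real \<Rightarrow> real \<Rightarrow> real \<Rightarrow> real \<Rightarrow> real" where
  "F2 k r th z pR pS = - FA k r z pR pS * sin (2 * th) + FB k r z pR pS * cos (2 * th)"

definition F3 :: "real \<Rightarrow> real \<Rightarrow> real \<Rightarrow> real \<Rightarrow> real \<Rightarrow> real" where
  "F3 k r z pR pS = (2 * z * pR - r * pS) ^ 2 + 4 * z ^ 2 * (pS ^ 2 / r ^ 2 + 2 * k / rho r z)"

definition is_solution ::
  "real \<Rightarrow> real set \<Rightarrow> (real \<Rightarrow> real) \<Rightarrow> (real \<Rightarrow> real) \<Rightarrow> (real \<Rightarrow> real)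
     \<Rightarrow> (real \<Rightarrow> real) \<Rightarrow> (real \<Rightarrow> real) \<Rightarrow> bool" where
  "is_solution k I r th z pR pS \<longleftrightarrow>
     (\<forall>t\<in>I. r t > 0 \<and>
        (r has_real_derivative pR t) (at t) \<and>
        (th has_real_derivative pS t / (r t) ^ 2) (at t) \<and>
        (z has_real_derivative pS t / 2) (at t) \<and>
        (pR has_real_derivative
            (pS t ^ 2 / (r t) ^ 3 - 2 * k * (r t) ^ 3 / (rho (r t) (z t)) ^ 3)) (at t) \<and>
        (pS has_real_derivative
            (- 8 * k * (r t) ^ 2 * z t / (rho (r t) (z t)) ^ 3)) (at t))"

end

theory Submission
  imports Defs
begin

(* The pair (FA, FB) rotates with angular velocity 2 th' along solutions, so its rotation
   (F1, F2) by the angle 2 th is conserved, and H, F3 are conserved by direct computation.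
   Everything else is pointwise algebra, from the identities FA^2 + FB^2 = 2 H F3 + k^2 and
   F3 = 8 z^2 H + k rho - r^2 FB, where FB = J cos (2 (th - th0)).
   If J = 0 then FB = 0 and 2 H F3 = -k^2, which makes F3 a root of a quadratic whose roots are
   k (rho -+ r^2) / 2; the bound F3 >= k (r^4 + 8 z^2) / rho excludes the smaller root, and
   2 F3 - k r^2 = k rho squares to the ellipsoid. If F3 = 0, then z = pS = 0 because F3 is a sum
   of nonnegative terms, hence (F1, F2) = k (sin 2th, cos 2th). *)

lemma rho_pos: "r > 0 \<Longrightarrow> rho r z > 0"
  unfolding rho_def by (simp add: add_pos_nonneg)

lemma rho_squared: "rho r z ^ 2 = r ^ 4 + 16 * z ^ 2"
  unfolding rho_def by simp

lemma rotation_inverse: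
  fixes a b c s :: real
  assumes "s ^ 2 + c ^ 2 = 1"
  shows "a = (a * c + b * s) * c - (- a * s + b * c) * s"
    and "b = (a * c + b * s) * s + (- a * s + b * c) * c"
    and "(a * c + b * s) ^ 2 + (- a * s + b * c) ^ 2 = a ^ 2 + b ^ 2"
  using assms by algebra+

lemma FA_eq_F1_F2: "FA k r z pR pS = F1 k r th z pR pS * cos (2 * th) - F2 k r th z pR pS * sin (2 * th)"
  unfolding F1_def F2_def by (rule rotation_inverse) simp

lemma FB_eq_F1_F2: "FB k r z pR pS = F1 k r th z pR pS * sin (2 * th) + F2 k r th z pR pS * cos (2 * th)"
  unfolding F1_def F2_def by (rule rotation_inverse) simp

lemma F1_squared_plus_F2_squared:
  "F1 k r th z pR pS ^ 2 + F2 k r th z pR pS ^ 2 = FA k r z pR pS ^ 2 + FB k r z pR pS ^ 2"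
  unfolding F1_def F2_def by (rule rotation_inverse) simp

lemma FA_squared_plus_FB_squared:
  assumes "r > 0"
  shows "FA k r z pR pS ^ 2 + FB k r z pR pS ^ 2 = 2 * Ham k r z pR pS * F3 k r z pR pS + k ^ 2"
proof -
  have "rho r z > 0" using assms by (rule rho_pos)
  with assms show ?thesis
    unfolding FA_def FB_def Ham_def F3_def
    by (simp add: field_simps) (use rho_squared[of r z] in algebra)
qed

lemma F3_eq_Ham_FB:
  assumes "r > 0"
  shows "F3 k r z pR pS = 8 * z ^ 2 * Ham k r z pR pS + k * rho r z - r ^ 2 * FB k r z pR pS"
proof -
  have "rho r z > 0" using assms by (rule rho_pos)
  with assms show ?thesis
    unfolding FB_def Ham_def F3_def
    by (simp add: field_simps) (use rho_squared[of r z] in algebra)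
qed

lemma F3_eq_kinetic_FB:
  assumes "r > 0"
  shows "F3 k r z pR pS = 4 * z ^ 2 * (pR ^ 2 + pS ^ 2 / r ^ 2) + k * (r ^ 4 + 8 * z ^ 2) / rho r z
    - r ^ 2 * FB k r z pR pS"
proof -
  have "rho r z > 0" using assms by (rule rho_pos)
  with assms show ?thesis
    unfolding FB_def F3_def
    by (simp add: field_simps) algebra
qed

lemma F3_eq_0_iff:
  assumes "k > 0" "r > 0"
  shows "F3 k r z pR pS = 0 \<longleftrightarrow> z = 0 \<and> pS = 0"
proof -
  have "rho r z > 0" using assms(2) by (rule rho_pos)
  then have "F3 k r z pR pS = (2 * z * pR - r * pS) ^ 2 + 4 * z ^ 2 * pS ^ 2 / r ^ 2 + 8 * k * z ^ 2 / rho r z"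
    and "4 * z ^ 2 * pS ^ 2 / r ^ 2 \<ge> 0" "8 * k * z ^ 2 / rho r z \<ge> 0"
    using assms unfolding F3_def by (simp_all add: field_simps)
  with assms \<open>rho r z > 0\<close> show ?thesis
    by (auto simp: add_nonneg_eq_0_iff)
qed

lemma invariant_surface:
  assumes "r > 0" "J \<ge> 0"
    and F1: "F1 k r th z pR pS = J * sin (2 * \<theta>0)" and F2: "F2 k r th z pR pS = J * cos (2 * \<theta>0)"
  shows "F3 k r z pR pS = 8 * z ^ 2 * Ham k r z pR pS + k * sqrt (r ^ 4 + 16 * z ^ 2)
    - sqrt (k ^ 2 + 2 * Ham k r z pR pS * F3 k r z pR pS) * r ^ 2 * cos (2 * (th - \<theta>0))"
proof -
  have "J ^ 2 = F1 k r th z pR pS ^ 2 + F2 k r th z pR pS ^ 2"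
    unfolding F1 F2 power_mult_distrib distrib_left[symmetric] by simp
  also have "\<dots> = k ^ 2 + 2 * Ham k r z pR pS * F3 k r z pR pS"
    using F1_squared_plus_F2_squared FA_squared_plus_FB_squared[OF \<open>r > 0\<close>] by simp
  finally have J: "sqrt (k ^ 2 + 2 * Ham k r z pR pS * F3 k r z pR pS) = J"
    using \<open>J \<ge> 0\<close> by (metis real_sqrt_unique)
  have "FB k r z pR pS = J * cos (2 * (th - \<theta>0))"
    unfolding FB_eq_F1_F2[of _ _ _ _ _ th] F1 F2 by (simp add: cos_diff algebra_simps)
  then show ?thesis
    unfolding J using F3_eq_Ham_FB[OF \<open>r > 0\<close>, of k z pR pS] by (simp add: rho_def algebra_simps)
qed

lemma invariant_ellipsoid_if_F1_F2_eq_0: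
  assumes "k > 0" "r > 0" "F1 k r th z pR pS = 0" "F2 k r th z pR pS = 0"
  shows "4 * k ^ 2 * z ^ 2 + k * F3 k r z pR pS * r ^ 2 = F3 k r z pR pS ^ 2"
proof -
  define R f where "R = rho r z" and "f = F3 k r z pR pS"
  have R: "R > 0" "R ^ 2 = r ^ 4 + 16 * z ^ 2"
    unfolding R_def using rho_pos[OF \<open>r > 0\<close>] rho_squared by auto
  have FB: "FB k r z pR pS = 0" and FA: "FA k r z pR pS = 0"
    using assms(3,4) FB_eq_F1_F2[of k r z pR pS th] FA_eq_F1_F2[of k r z pR pS th] by simp_all
  then have Hf: "2 * Ham k r z pR pS * f = - (k ^ 2)"
    using FA_squared_plus_FB_squared[OF \<open>r > 0\<close>, of k z pR pS] unfolding f_def by simp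
  have f: "f = 8 * z ^ 2 * Ham k r z pR pS + k * R"
    using F3_eq_Ham_FB[OF \<open>r > 0\<close>, of k z pR pS] FB unfolding f_def R_def by simp
  have "(f - k * (R - r ^ 2) / 2) * (f - k * (R + r ^ 2) / 2) = 0"
    using f Hf R(2) by algebra
  moreover have "f - k * (R - r ^ 2) / 2 > 0"
  proof -
    have "f \<ge> k * (r ^ 4 + 8 * z ^ 2) / R"
      using F3_eq_kinetic_FB[OF \<open>r > 0\<close>, of k z pR pS] FB unfolding f_def R_def by simp
    moreover have "k * (r ^ 4 + 8 * z ^ 2) / R - k * (R - r ^ 2) / 2 = k * r ^ 2 * (r ^ 2 + R) / (2 * R)"
      using R by (simp add: field_simps) algebra
    moreover have "k * r ^ 2 * (r ^ 2 + R) / (2 * R) > 0"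
      using R \<open>k > 0\<close> \<open>r > 0\<close> by (intro divide_pos_pos mult_pos_pos add_pos_pos) auto
    ultimately show ?thesis by linarith
  qed
  ultimately have "f = k * (R + r ^ 2) / 2" by simp
  then have "2 * f - k * r ^ 2 = k * R" by (simp add: algebra_simps)
  then have "(2 * f - k * r ^ 2) ^ 2 = k ^ 2 * (r ^ 4 + 16 * z ^ 2)"
    by (simp add: R(2)[symmetric] power_mult_distrib)
  then show ?thesis unfolding f_def[symmetric] by algebra
qed

lemma invariant_line_if_F3_eq_0:
  assumes "k > 0" "r > 0" "J \<ge> 0" "F3 k r z pR pS = 0"
    and F1: "F1 k r th z pR pS = J * sin (2 * \<theta>0)" and F2: "F2 k r th z pR pS = J * cos (2 * \<theta>0)"
  shows "z = 0 \<and> (\<exists>n::int. th = \<theta>0 + of_int n * pi)"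
proof -
  have "z = 0" "pS = 0" using assms(1,2,4) F3_eq_0_iff by auto
  then have "rho r z = r ^ 2" using \<open>r > 0\<close> unfolding rho_def by (simp add: real_sqrt_unique)
  then have "FA k r z pR pS = 0" "FB k r z pR pS = k"
    using \<open>z = 0\<close> \<open>pS = 0\<close> \<open>r > 0\<close> unfolding FA_def FB_def by simp_all
  then have k_sin: "k * sin (2 * th) = J * sin (2 * \<theta>0)" and k_cos: "k * cos (2 * th) = J * cos (2 * \<theta>0)"
    using F1 F2 unfolding F1_def F2_def by simp_all
  have "J ^ 2 = (J * sin (2 * \<theta>0)) ^ 2 + (J * cos (2 * \<theta>0)) ^ 2"
    and "k ^ 2 = (k * sin (2 * th)) ^ 2 + (k * cos (2 * th)) ^ 2"
    by (simp_all only: power_mult_distrib distrib_left[symmetric] sin_cos_squared_add mult_1_right)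
  then have "J ^ 2 = k ^ 2" unfolding k_sin k_cos by simp
  then have "J = k" using \<open>k > 0\<close> \<open>J \<ge> 0\<close> by (simp add: power2_eq_iff_nonneg less_imp_le)
  then have "sin (2 * th) = sin (2 * \<theta>0)" "cos (2 * th) = cos (2 * \<theta>0)"
    using k_sin k_cos \<open>k > 0\<close> by simp_all
  then have "cos (2 * th - 2 * \<theta>0) = 1"
    unfolding cos_diff by (metis sin_cos_squared_add power2_eq_square add.commute)
  then obtain n :: int where "2 * th - 2 * \<theta>0 = of_int n * (2 * pi)"
    by (auto simp: cos_one_2pi_int)
  then have "th = \<theta>0 + of_int n * pi" by (simp add: algebra_simps)
  with \<open>z = 0\<close> show ?thesis by blast
qed

lemma has_real_derivative_rho:
  assumes "(r has_real_derivative r') (at t)" "(z has_real_derivative z') (at t)" "r t > 0"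
  shows "((\<lambda>t. rho (r t) (z t)) has_real_derivative
           (2 * r t ^ 3 * r' + 16 * z t * z') / rho (r t) (z t)) (at t)"
proof -
  have pos: "r t ^ 4 + 16 * z t ^ 2 > 0" using assms(3) by (simp add: add_pos_nonneg)
  have "((\<lambda>t. r t ^ 4 + 16 * z t ^ 2) has_real_derivative 4 * r t ^ 3 * r' + 32 * z t * z') (at t)"
    by (auto intro!: derivative_eq_intros assms)
  from DERIV_chain2[OF DERIV_real_sqrt[OF pos] this] show ?thesis
    unfolding rho_def by (rule DERIV_cong) (use pos in \<open>simp add: field_simps\<close>)
qed

lemma DERIV_zero_on_interval_eq:
  fixes f :: "real \<Rightarrow> real"
  assumes "is_interval I" "\<And>t. t \<in> I \<Longrightarrow> (f has_real_derivative 0) (at t)" "s \<in> I" "t \<in> I"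
  shows "f s = f t"
proof -
  obtain c where "\<forall>x\<in>I. f x = c"
    using has_field_derivative_zero_constant[of I f] assms(1,2)
    by (meson has_field_derivative_at_within is_interval_convex_1)
  with assms(3,4) show ?thesis by simp
qed

locale heisenberg_trajectory =
  fixes k :: real and I :: "real set" and r th z pR pS :: "real \<Rightarrow> real"
  assumes solution: "is_solution k I r th z pR pS"
begin

lemma
  assumes "t \<in> I"
  shows r_pos: "r t > 0"
    and r_deriv: "(r has_real_derivative pR t) (at t)"
    and th_deriv: "(th has_real_derivative pS t / r t ^ 2) (at t)"
    and z_deriv: "(z has_real_derivative pS t / 2) (at t)"
    and pR_deriv: "(pR has_real_derivative
          pS t ^ 2 / r t ^ 3 - 2 * k * r t ^ 3 / rho (r t) (z t) ^ 3) (at t)"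
    and pS_deriv: "(pS has_real_derivative - 8 * k * r t ^ 2 * z t / rho (r t) (z t) ^ 3) (at t)"
  using solution assms unfolding is_solution_def by auto

lemma rho_deriv:
  assumes "t \<in> I"
  shows "((\<lambda>t. rho (r t) (z t)) has_real_derivative
           (2 * r t ^ 3 * pR t + 16 * z t * (pS t / 2)) / rho (r t) (z t)) (at t)"
  using has_real_derivative_rho r_deriv z_deriv r_pos assms by blast

lemmas state_derivs = r_deriv z_deriv pR_deriv pS_deriv rho_deriv

lemma state_nonzero:
  assumes "t \<in> I"
  shows "r t \<noteq> 0" "rho (r t) (z t) \<noteq> 0"
  using r_pos[OF assms] rho_pos[of "r t" "z t"] by auto

lemma Ham_deriv_zero:
  assumes "t \<in> I"
  shows "((\<lambda>t. Ham k (r t) (z t) (pR t) (pS t)) has_real_derivative 0) (at t)"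
  unfolding Ham_def
  apply (rule derivative_eq_intros state_derivs[OF assms] refl | use state_nonzero[OF assms] in force)+
  using state_nonzero[OF assms] by (simp add: field_simps) algebra

lemma F3_deriv_zero:
  assumes "t \<in> I"
  shows "((\<lambda>t. F3 k (r t) (z t) (pR t) (pS t)) has_real_derivative 0) (at t)"
  unfolding F3_def
  apply (rule derivative_eq_intros state_derivs[OF assms] refl | use state_nonzero[OF assms] in force)+
  using state_nonzero[OF assms] rho_squared[of "r t" "z t"] by (simp add: field_simps) algebra

lemma FA_deriv:
  assumes "t \<in> I"
  shows "((\<lambda>t. FA k (r t) (z t) (pR t) (pS t)) has_real_derivative
           - 2 * (pS t / r t ^ 2) * FB k (r t) (z t) (pR t) (pS t)) (at t)"
  unfolding FA_def FB_def
  apply (rule derivative_eq_intros state_derivs[OF assms] refl | use state_nonzero[OF assms] in force)+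
  using state_nonzero[OF assms] rho_squared[of "r t" "z t"] by (simp add: field_simps) algebra

lemma FB_deriv:
  assumes "t \<in> I"
  shows "((\<lambda>t. FB k (r t) (z t) (pR t) (pS t)) has_real_derivative
           2 * (pS t / r t ^ 2) * FA k (r t) (z t) (pR t) (pS t)) (at t)"
  unfolding FA_def FB_def
  apply (rule derivative_eq_intros state_derivs[OF assms] refl | use state_nonzero[OF assms] in force)+
  using state_nonzero[OF assms] rho_squared[of "r t" "z t"] by (simp add: field_simps) algebra

lemma F1_deriv_zero:
  assumes "t \<in> I"
  shows "((\<lambda>t. F1 k (r t) (th t) (z t) (pR t) (pS t)) has_real_derivative 0) (at t)"
  unfolding F1_def
  by (rule derivative_eq_intros FA_deriv[OF assms] FB_deriv[OF assms] th_deriv[OF assms] refl)+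
    (simp add: algebra_simps)

lemma F2_deriv_zero:
  assumes "t \<in> I"
  shows "((\<lambda>t. F2 k (r t) (th t) (z t) (pR t) (pS t)) has_real_derivative 0) (at t)"
  unfolding F2_def
  by (rule derivative_eq_intros FA_deriv[OF assms] FB_deriv[OF assms] th_deriv[OF assms] refl)+
    (simp add: algebra_simps)

lemma first_integrals_conserved:
  assumes "is_interval I" "s \<in> I" "t \<in> I"
  shows "Ham k (r s) (z s) (pR s) (pS s) = Ham k (r t) (z t) (pR t) (pS t)"
    and "F1 k (r s) (th s) (z s) (pR s) (pS s) = F1 k (r t) (th t) (z t) (pR t) (pS t)"
    and "F2 k (r s) (th s) (z s) (pR s) (pS s) = F2 k (r t) (th t) (z t) (pR t) (pS t)"
    and "F3 k (r s) (z s) (pR s) (pS s) = F3 k (r t) (z t) (pR t) (pS t)"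
  using DERIV_zero_on_interval_eq[OF assms(1) _ assms(2,3)] Ham_deriv_zero F1_deriv_zero F2_deriv_zero F3_deriv_zero
  by blast+

end

theorem theorem3:
  fixes k :: real and I :: "real set" and t0 :: real
    and r th z pR pS :: "real \<Rightarrow> real"
  assumes k: "k > 0"
    and I: "open I" "is_interval I" "t0 \<in> I"
    and sol: "is_solution k I r th z pR pS"
  defines "h \<equiv> Ham k (r t0) (z t0) (pR t0) (pS t0)"
    and "f1 \<equiv> F1 k (r t0) (th t0) (z t0) (pR t0) (pS t0)"
    and "f2 \<equiv> F2 k (r t0) (th t0) (z t0) (pR t0) (pS t0)"
    and "f3 \<equiv> F3 k (r t0) (z t0) (pR t0) (pS t0)"
    and "J \<equiv> sqrt ((F1 k (r t0) (th t0) (z t0) (pR t0) (pS t0)) ^ 2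
                  + (F2 k (r t0) (th t0) (z t0) (pR t0) (pS t0)) ^ 2)"
  shows
    "(f3 > 0 \<and> J > 0 \<longrightarrow>
       (\<forall>\<theta>0. 0 \<le> \<theta>0 \<and> \<theta>0 < pi \<and> f1 = J * sin (2 * \<theta>0) \<and> f2 = J * cos (2 * \<theta>0) \<longrightarrow>
         (\<forall>t\<in>I. f3 = 8 * (z t) ^ 2 * h + k * sqrt ((r t) ^ 4 + 16 * (z t) ^ 2)
                      - sqrt (k ^ 2 + 2 * h * f3) * (r t) ^ 2 * cos (2 * (th t - \<theta>0)))))
   \<and> (f3 > 0 \<and> J = 0 \<longrightarrow>
       (\<forall>t\<in>I. 4 * k ^ 2 * (z t) ^ 2 + k * f3 * (r t) ^ 2 = f3 ^ 2))
   \<and> (f3 = 0 \<longrightarrow>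
       (\<forall>\<theta>0. 0 \<le> \<theta>0 \<and> \<theta>0 < pi \<and> f1 = J * sin (2 * \<theta>0) \<and> f2 = J * cos (2 * \<theta>0) \<longrightarrow>
         (\<forall>t\<in>I. z t = 0 \<and> (\<exists>n::int. th t = \<theta>0 + of_int n * pi))))"
proof -
  interpret heisenberg_trajectory k I r th z pR pS
    using sol by unfold_locales
  have conserved: "Ham k (r t) (z t) (pR t) (pS t) = h" "F1 k (r t) (th t) (z t) (pR t) (pS t) = f1"
    "F2 k (r t) (th t) (z t) (pR t) (pS t) = f2" "F3 k (r t) (z t) (pR t) (pS t) = f3"
    if "t \<in> I" for t
    unfolding h_def f1_def f2_def f3_def using first_integrals_conserved[OF I(2) that I(3)] by simp_all
  have "J \<ge> 0" unfolding J_def by simp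
  have J: "J = sqrt (f1 ^ 2 + f2 ^ 2)" unfolding J_def f1_def f2_def ..
  show ?thesis
  proof (intro conjI impI allI ballI; elim conjE)
    fix \<theta>0 t assume "t \<in> I" "f1 = J * sin (2 * \<theta>0)" "f2 = J * cos (2 * \<theta>0)"
    with invariant_surface[OF r_pos[OF \<open>t \<in> I\<close>] \<open>J \<ge> 0\<close>, of k "th t" "z t" "pR t" "pS t" \<theta>0]
    show "f3 = 8 * (z t) ^ 2 * h + k * sqrt ((r t) ^ 4 + 16 * (z t) ^ 2)
                      - sqrt (k ^ 2 + 2 * h * f3) * (r t) ^ 2 * cos (2 * (th t - \<theta>0))"
      by (simp add: conserved)
  next
    fix t assume "J = 0" "t \<in> I"
    then have "f1 = 0" "f2 = 0" unfolding J by (simp_all add: sum_power2_eq_zero_iff)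
    with invariant_ellipsoid_if_F1_F2_eq_0[OF k r_pos[OF \<open>t \<in> I\<close>], of "th t" "z t" "pR t" "pS t"] \<open>t \<in> I\<close>
    show "4 * k ^ 2 * (z t) ^ 2 + k * f3 * (r t) ^ 2 = f3 ^ 2"
      by (simp add: conserved)
  next
    fix \<theta>0 t assume "f3 = 0" "t \<in> I" "f1 = J * sin (2 * \<theta>0)" "f2 = J * cos (2 * \<theta>0)"
    with invariant_line_if_F3_eq_0[OF k r_pos[OF \<open>t \<in> I\<close>] \<open>J \<ge> 0\<close>, of "z t" "pR t" "pS t" "th t" \<theta>0]
    show "z t = 0" and "\<exists>n::int. th t = \<theta>0 + of_int n * pi"
      by (simp_all add: conserved)
  qed
qed

end
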